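(* For every rooted tree $T$: $\mathcal{P}(T;1,1)$ is the number of maximal antichains of $T$; $\mathcal{P}(T;x,0)=x^{m}$ where $m$ is the number of leaves of $T$; $\mathcal{P}(T;0,1)$ is the number of maximal antichains of $T$ containing no leaves; $\mathcal{P}(T;2,1)$ is the number of antichains of $T$ (including the empty set); $\mathcal{P}(T;1,2)$ is the number of cutsets of $T$; $\mathcal{P}(T;2,2)=2^{|T|}$.
   Context: For a rooted tree $T$ with root $r$, the branches $T_1,\dots,T_k$ are the subtrees obtained by deleting $r$, each rooted at the neighbour of $r$ it contains; $|T|$ is the number of vertices. The polynomial $\mathcal{P}(T;x,y)$ is defined recursively by $\mathcal{P}(T;x,y)=x$ if $T$ has a single vertex, and otherwise $\mathcal{P}(T;x,y)=\prod_{i=1}^k\mathcal{P}(T_i;x,y)+y^{|T|-1}$. An antichain in $T$ is a set of vertices no two of which lie on a common path starting at the root; a maximal antichain is one not properly contained in another antichain. A leaf is a vertex with no children. A cutset (transversal) is a set of vertices meeting every path from the root to a leaf. *)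

theory Defs
  imports Main "HOL-Library.Sublist"
begin

text \<open>Rooted (ordered) trees as rose trees. The vertices of a tree are addressed
by lists of child indices; the root is the empty address.\<close>

datatype rtree = Node "rtree list"

function (sequential) verts :: "rtree \<Rightarrow> nat list set" where
  "verts (Node ts) = insert [] (\<Union>i<length ts. (Cons i) ` verts (ts ! i))"
  by pat_completeness auto
termination
  by (relation "measure size") (auto simp: less_Suc_eq_le intro!: size_list_estimation')

definition comparable :: "nat list \<Rightarrow> nat list \<Rightarrow> bool" where
  "comparable u v \<longleftrightarrow> prefix u v \<or> prefix v u"

definition antichain :: "rtree \<Rightarrow> nat list set \<Rightarrow> bool" where
  "antichain T A \<longleftrightarrow> A \<subseteq> verts T \<and> (\<forall>u\<in>A. \<forall>v\<in>A. u \<noteq> v \<longrightarrow> \<not> comparable u v)"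

definition maximal_antichain :: "rtree \<Rightarrow> nat list set \<Rightarrow> bool" where
  "maximal_antichain T A \<longleftrightarrow> antichain T A \<and> (\<forall>B. antichain T B \<and> A \<subseteq> B \<longrightarrow> B = A)"

definition is_leaf :: "rtree \<Rightarrow> nat list \<Rightarrow> bool" where
  "is_leaf T v \<longleftrightarrow> v \<in> verts T \<and> (\<forall>i. v @ [i] \<notin> verts T)"

definition leaves :: "rtree \<Rightarrow> nat list set" where
  "leaves T = {v. is_leaf T v}"

text \<open>A cutset meets every path from the root to a leaf; the vertices on the
root-to-leaf path ending in l are exactly the prefixes of l.\<close>
definition cutset :: "rtree \<Rightarrow> nat list set \<Rightarrow> bool" where
  "cutset T C \<longleftrightarrow> C \<subseteq> verts T \<and> (\<forall>l\<in>leaves T. \<exists>c\<in>C. prefix c l)"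

fun P :: "rtree \<Rightarrow> 'a::comm_semiring_1 \<Rightarrow> 'a \<Rightarrow> 'a" where
  "P (Node ts) x y =
     (if ts = [] then x
      else prod_list (map (\<lambda>t. P t x y) ts) + y ^ (card (verts (Node ts)) - 1))"

end

theory Submission
  imports Defs "HOL-Library.FuncSet"
begin

(*
  Each statistic satisfies the recursion defining P.  A counted vertex set either contains
  the root or not.  If it does, it is {root} for (maximal) antichains, and an arbitrary
  set of vertices containing the root for cutsets and for plain vertex sets, which gives the
  term y^(|T|-1) with y = 1 resp. y = 2.  If it does not, it splits uniquely into independent
  sets of the same kind in the branches (for maximal antichains and cutsets this needs at
  least one branch), which gives the product over the branches.  For y = 0 the root term
  vanishes since |T| >= 2, so P(T;x,0) multiplies over the branches down to the leaves.
*)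

lemma Nil_in_verts [simp]: "[] \<in> verts T"
  by (cases T) simp

lemma Cons_in_verts_Node [simp]:
  "i # v \<in> verts (Node ts) \<longleftrightarrow> i < length ts \<and> v \<in> verts (ts ! i)"
  by auto

lemma finite_verts [simp]: "finite (verts T)"
  by (induction T rule: rtree.induct) auto

lemma verts_Node_Nil: "verts (Node []) = {[]}"
  by simp

declare verts.simps [simp del]

lemma card_verts_Node_ge_2:
  assumes "ts \<noteq> []"
  shows "2 \<le> card (verts (Node ts))"
proof -
  have "{[], [0]} \<subseteq> verts (Node ts)"
    using assms by simp
  from card_mono[OF finite_verts this] show ?thesis by simp
qed

lemma P_eqI:
  assumes "f (Node []) = x"
    and "\<And>ts. ts \<noteq> [] \<Longrightarrow> f (Node ts) = prod_list (map f ts) + y ^ (card (verts (Node ts)) - 1)"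
  shows "P T x y = f T"
proof (induction T rule: rtree.induct)
  case (Node ts)
  show ?case
  proof (cases "ts = []")
    case True
    then show ?thesis using assms(1) by simp
  next
    case False
    have children: "map (\<lambda>t. P t x y) ts = map f ts"
      using Node.IH by (intro map_cong) simp_all
    show ?thesis
      using False by (simp add: children assms(2)[OF False])
  qed
qed

definition branch_part :: "nat \<Rightarrow> nat list set \<Rightarrow> nat list set" where
  "branch_part i A = {v. i # v \<in> A}"

lemma card_branchwise:
  "card {S. S \<subseteq> (\<Union>i<k. range (Cons i)) \<and> (\<forall>i<k. Q i (branch_part i S))}
     = (\<Prod>i<k. card {A. Q i A})"
proof -
  let ?join = "\<lambda>f. \<Union>i<k. Cons i ` f i"
  let ?split = "\<lambda>S. restrict (\<lambda>i. branch_part i S) {..<k}"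
  let ?D = "\<Pi>\<^sub>E i\<in>{..<k}. {A. Q i A}"
  let ?S = "{S. S \<subseteq> (\<Union>i<k. range (Cons i)) \<and> (\<forall>i<k. Q i (branch_part i S))}"
  have branch_part_join: "branch_part i (?join f) = f i" if "i < k" for i f
    using that by (auto simp: branch_part_def)
  have "bij_betw ?join ?D ?S"
  proof (rule bij_betw_byWitness[where f' = ?split])
    show "\<forall>f\<in>?D. ?split (?join f) = f"
    proof (intro ballI ext)
      fix f i assume "f \<in> ?D"
      then show "?split (?join f) i = f i"
        by (cases "i < k") (simp_all add: branch_part_join PiE_iff extensional_def)
    qed
    show "\<forall>S\<in>?S. ?join (?split S) = S"
    proof
      fix S assume S: "S \<in> ?S"
      show "?join (?split S) = S"
      proof (intro equalityI subsetI)
        fix s assume "s \<in> ?join (?split S)"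
        then show "s \<in> S" by (auto simp: branch_part_def)
      next
        fix s assume "s \<in> S"
        moreover obtain i v where "i < k" "s = i # v"
          using S \<open>s \<in> S\<close> by blast
        ultimately show "s \<in> ?join (?split S)"
          by (intro UN_I[of i]) (auto simp: branch_part_def)
      qed
    qed
    show "?join ` ?D \<subseteq> ?S"
      by (auto simp: branch_part_join PiE_iff)
    show "?split ` ?S \<subseteq> ?D"
      by auto
  qed
  then have "card ?D = card ?S"
    by (rule bij_betw_same_card)
  then show ?thesis
    by (simp add: card_PiE)
qed

lemma prod_list_map_conv_prod_nth:
  "prod_list (map f xs) = (\<Prod>i<length xs. f (xs ! i))"
  by (simp add: prod.list_conv_set_nth atLeast0LessThan)

lemma P_of_nat_eq_card:
  fixes Q :: "rtree \<Rightarrow> nat list set \<Rightarrow> bool"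
  assumes Q_verts: "\<And>T A. Q T A \<Longrightarrow> A \<subseteq> verts T"
    and leaf: "card {A. Q (Node []) A} = x"
    and with_root: "\<And>ts. ts \<noteq> [] \<Longrightarrow>
      card {A. Q (Node ts) A \<and> [] \<in> A} = y ^ (card (verts (Node ts)) - 1)"
    and without_root: "\<And>ts A. ts \<noteq> [] \<Longrightarrow> [] \<notin> A \<Longrightarrow>
      Q (Node ts) A \<longleftrightarrow> A \<subseteq> (\<Union>i<length ts. range (Cons i))
        \<and> (\<forall>i<length ts. Q (ts ! i) (branch_part i A))"
  shows "P T (of_nat x) (of_nat y) = (of_nat (card {A. Q T A}) :: 'a::comm_semiring_1)"
proof (rule P_eqI)
  show "of_nat (card {A. Q (Node []) A}) = (of_nat x :: 'a)"
    using leaf by simp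
next
  fix ts :: "rtree list"
  assume ne: "ts \<noteq> []"
  have finite: "finite {A. Q T A \<and> R A}" for T R
    by (rule finite_subset[of _ "Pow (verts T)"]) (use Q_verts in blast, simp)
  have "{A. Q (Node ts) A \<and> [] \<notin> A}
      = {S. S \<subseteq> (\<Union>i<length ts. range (Cons i)) \<and> (\<forall>i<length ts. Q (ts ! i) (branch_part i S))}"
  proof (rule Collect_cong)
    fix A
    show "Q (Node ts) A \<and> [] \<notin> A \<longleftrightarrow>
      A \<subseteq> (\<Union>i<length ts. range (Cons i)) \<and> (\<forall>i<length ts. Q (ts ! i) (branch_part i A))"
    proof (cases "[] \<in> A")
      case True
      then show ?thesis by blast
    next
      case False
      then show ?thesis using without_root[OF ne False] by blast
    qed
  qed
  then have without: "card {A. Q (Node ts) A \<and> [] \<notin> A} = (\<Prod>i<length ts. card {A. Q (ts ! i) A})"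
    using card_branchwise[where k = "length ts" and Q = "\<lambda>i. Q (ts ! i)"] by simp
  have "card {A. Q (Node ts) A}
      = card ({A. Q (Node ts) A \<and> [] \<in> A} \<union> {A. Q (Node ts) A \<and> [] \<notin> A})"
    by (rule arg_cong[where f = card]) blast
  also have "\<dots> = card {A. Q (Node ts) A \<and> [] \<in> A} + card {A. Q (Node ts) A \<and> [] \<notin> A}"
    by (intro card_Un_disjoint finite) blast
  finally have "card {A. Q (Node ts) A}
      = y ^ (card (verts (Node ts)) - 1) + (\<Prod>i<length ts. card {A. Q (ts ! i) A})"
    by (simp only: with_root[OF ne] without)
  then show "of_nat (card {A. Q (Node ts) A}) = prod_list (map (\<lambda>t. of_nat (card {A. Q t A})) ts)
      + (of_nat y :: 'a) ^ (card (verts (Node ts)) - 1)"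
    by (simp add: prod_list_map_conv_prod_nth add.commute)
qed

lemma card_subsets_containing:
  assumes "finite V" "a \<in> V"
  shows "card {C. a \<in> C \<and> C \<subseteq> V} = 2 ^ (card V - 1)"
proof -
  have "{C. a \<in> C \<and> C \<subseteq> V} = insert a ` Pow (V - {a})"
  proof (intro equalityI subsetI)
    fix C assume "C \<in> {C. a \<in> C \<and> C \<subseteq> V}"
    then have "C = insert a (C - {a})" "C - {a} \<in> Pow (V - {a})" by auto
    then show "C \<in> insert a ` Pow (V - {a})" by (rule image_eqI)
  qed (use assms(2) in auto)
  moreover have "inj_on (insert a) (Pow (V - {a}))"
    by (auto simp: inj_on_def insert_ident)
  ultimately show ?thesis
    using assms by (simp add: card_image card_Pow card_Diff_singleton)
qed

lemma subset_verts_Node_iff: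
  assumes "[] \<notin> A"
  shows "A \<subseteq> verts (Node ts) \<longleftrightarrow> A \<subseteq> (\<Union>i<length ts. range (Cons i))
    \<and> (\<forall>i<length ts. branch_part i A \<subseteq> verts (ts ! i))"
proof
  assume A: "A \<subseteq> verts (Node ts)"
  have "A \<subseteq> (\<Union>i<length ts. range (Cons i))"
  proof
    fix a assume "a \<in> A"
    moreover obtain i v where "a = i # v"
      using assms \<open>a \<in> A\<close> by (cases a) auto
    ultimately have "i < length ts"
      using A by auto
    with \<open>a = i # v\<close> show "a \<in> (\<Union>i<length ts. range (Cons i))"
      by blast
  qed
  moreover have "\<forall>i<length ts. branch_part i A \<subseteq> verts (ts ! i)"
    using A by (auto simp: branch_part_def)
  ultimately show "A \<subseteq> (\<Union>i<length ts. range (Cons i))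
    \<and> (\<forall>i<length ts. branch_part i A \<subseteq> verts (ts ! i))" ..
next
  assume "A \<subseteq> (\<Union>i<length ts. range (Cons i))
    \<and> (\<forall>i<length ts. branch_part i A \<subseteq> verts (ts ! i))"
  then show "A \<subseteq> verts (Node ts)"
    unfolding branch_part_def by fastforce
qed

lemma P_2_2_eq_power_card_verts: "P T (2::'a::comm_semiring_1) 2 = 2 ^ card (verts T)"
proof -
  have "P T (of_nat 2) (of_nat 2) = (of_nat (card {A. A \<subseteq> verts T}) :: 'a)"
  proof (rule P_of_nat_eq_card[where Q = "\<lambda>T A. A \<subseteq> verts T"])
    show "card {A. A \<subseteq> verts (Node [])} = 2"
      by (simp add: verts_Node_Nil Pow_def[symmetric] card_Pow)
    show "card {A. A \<subseteq> verts (Node ts) \<and> [] \<in> A} = 2 ^ (card (verts (Node ts)) - 1)" for ts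
      using card_subsets_containing[of "verts (Node ts)" "[]"] by (simp add: conj_commute)
  qed (simp_all add: subset_verts_Node_iff)
  then show ?thesis
    by (simp add: Pow_def[symmetric] card_Pow)
qed

lemma leaves_Node_Nil: "leaves (Node []) = {[]}"
  by (auto simp: leaves_def is_leaf_def verts_Node_Nil)

lemma is_leaf_Cons: "is_leaf (Node ts) (i # v) \<longleftrightarrow> i < length ts \<and> is_leaf (ts ! i) v"
  by (auto simp: is_leaf_def)

lemma leaves_Node:
  assumes "ts \<noteq> []"
  shows "leaves (Node ts) = (\<Union>i<length ts. Cons i ` leaves (ts ! i))"
proof -
  have "\<not> is_leaf (Node ts) []"
    using assms by (auto simp: is_leaf_def dest: spec[of _ 0])
  show ?thesis
  proof (intro equalityI subsetI)
    fix l assume l: "l \<in> leaves (Node ts)"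
    with \<open>\<not> is_leaf (Node ts) []\<close> obtain i v where "l = i # v"
      by (cases l) (auto simp: leaves_def)
    with l show "l \<in> (\<Union>i<length ts. Cons i ` leaves (ts ! i))"
      by (auto simp: leaves_def is_leaf_Cons)
  qed (auto simp: leaves_def is_leaf_Cons)
qed

lemma finite_leaves: "finite (leaves T)"
  by (rule finite_subset[OF _ finite_verts]) (auto simp: leaves_def is_leaf_def)

lemma card_leaves_Node:
  assumes "ts \<noteq> []"
  shows "card (leaves (Node ts)) = (\<Sum>i<length ts. card (leaves (ts ! i)))"
  unfolding leaves_Node[OF assms]
  by (subst card_UN_disjoint) (auto simp: finite_leaves card_image)

lemma P_x_0_eq_power_card_leaves: "P T (x::'a::comm_semiring_1) 0 = x ^ card (leaves T)"
proof (rule P_eqI)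
  show "x ^ card (leaves (Node [])) = x"
    by (simp add: leaves_Node_Nil)
next
  fix ts :: "rtree list"
  assume ne: "ts \<noteq> []"
  then have "(0::'a) ^ (card (verts (Node ts)) - 1) = 0"
    using card_verts_Node_ge_2[OF ne] by (simp add: power_0_left)
  then show "x ^ card (leaves (Node ts))
      = prod_list (map (\<lambda>t. x ^ card (leaves t)) ts) + 0 ^ (card (verts (Node ts)) - 1)"
    using ne by (simp add: card_leaves_Node prod_list_map_conv_prod_nth power_sum)
qed

lemma comparable_Cons_Cons [simp]:
  "comparable (i # u) (j # v) \<longleftrightarrow> i = j \<and> comparable u v"
  by (auto simp: comparable_def)

lemma comparable_Nil [simp]: "comparable [] v" "comparable v []"
  by (simp_all add: comparable_def)

lemma antichain_containing_root_iff: "antichain T A \<and> [] \<in> A \<longleftrightarrow> A = {[]}"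
proof
  assume "antichain T A \<and> [] \<in> A"
  then have A: "\<forall>u\<in>A. \<forall>v\<in>A. u \<noteq> v \<longrightarrow> \<not> comparable u v" "[] \<in> A"
    by (simp_all add: antichain_def)
  have "u = []" if "u \<in> A" for u
    using bspec[OF bspec[OF A(1) A(2)] that] by auto
  with A(2) show "A = {[]}" by blast
qed (simp add: antichain_def)

lemma incomparable_branchwise:
  assumes "A \<subseteq> (\<Union>i<k. range (Cons i))"
  shows "(\<forall>u\<in>A. \<forall>v\<in>A. u \<noteq> v \<longrightarrow> \<not> comparable u v) \<longleftrightarrow>
    (\<forall>i<k. \<forall>u\<in>branch_part i A. \<forall>v\<in>branch_part i A. u \<noteq> v \<longrightarrow> \<not> comparable u v)"
proof (intro iffI allI impI ballI)
  fix i u v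
  assume "\<forall>u\<in>A. \<forall>v\<in>A. u \<noteq> v \<longrightarrow> \<not> comparable u v"
    and "u \<in> branch_part i A" "v \<in> branch_part i A" "u \<noteq> v"
  moreover have "i # u \<in> A" "i # v \<in> A" "i # u \<noteq> i # v"
    using \<open>u \<in> branch_part i A\<close> \<open>v \<in> branch_part i A\<close> \<open>u \<noteq> v\<close>
    by (simp_all add: branch_part_def)
  ultimately have "\<not> comparable (i # u) (i # v)"
    by blast
  then show "\<not> comparable u v" by simp
next
  fix u v
  assume branches: "\<forall>i<k. \<forall>u\<in>branch_part i A. \<forall>v\<in>branch_part i A. u \<noteq> v \<longrightarrow> \<not> comparable u v"
    and uv: "u \<in> A" "v \<in> A" "u \<noteq> v"
  from uv(1) assms obtain i u' where "i < k" "u = i # u'" by blast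
  from uv(2) assms obtain j v' where "v = j # v'" by blast
  show "\<not> comparable u v"
  proof (cases "i = j")
    case True
    with uv \<open>u = i # u'\<close> \<open>v = j # v'\<close> have "u' \<in> branch_part i A" "v' \<in> branch_part i A" "u' \<noteq> v'"
      by (simp_all add: branch_part_def)
    with branches \<open>i < k\<close> have "\<not> comparable u' v'" by blast
    with True \<open>u = i # u'\<close> \<open>v = j # v'\<close> show ?thesis by simp
  next
    case False
    with \<open>u = i # u'\<close> \<open>v = j # v'\<close> show ?thesis by simp
  qed
qed

lemma antichain_Node_iff:
  assumes "[] \<notin> A"
  shows "antichain (Node ts) A \<longleftrightarrow> A \<subseteq> (\<Union>i<length ts. range (Cons i))
    \<and> (\<forall>i<length ts. antichain (ts ! i) (branch_part i A))"
  unfolding antichain_def subset_verts_Node_iff[OF assms]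
  by (cases "A \<subseteq> (\<Union>i<length ts. range (Cons i))")
    (simp_all add: incomparable_branchwise imp_conjR all_conj_distrib)

lemma antichain_subset_verts: "antichain T A \<Longrightarrow> A \<subseteq> verts T"
  by (simp add: antichain_def)

lemma antichains_Node_Nil: "{A. antichain (Node []) A} = Pow {[]}"
  unfolding antichain_def verts_Node_Nil Pow_def by (rule Collect_cong) blast

lemma P_2_1_eq_card_antichains: "P T (2::'a::comm_semiring_1) 1 = of_nat (card {A. antichain T A})"
proof -
  have "P T (of_nat 2) (of_nat 1) = (of_nat (card {A. antichain T A}) :: 'a)"
    by (rule P_of_nat_eq_card[where Q = antichain])
      (simp_all add: antichain_subset_verts antichains_Node_Nil card_Pow
        antichain_containing_root_iff antichain_Node_iff)
  then show ?thesis by simp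
qed

lemma comparable_sym: "comparable u v \<Longrightarrow> comparable v u"
  by (auto simp: comparable_def)

lemma maximal_antichain_iff:
  "maximal_antichain T A \<longleftrightarrow> antichain T A \<and> (\<forall>v\<in>verts T. \<exists>a\<in>A. comparable a v)"
proof
  assume max: "maximal_antichain T A"
  then have anti: "antichain T A" by (simp add: maximal_antichain_def)
  have "\<exists>a\<in>A. comparable a v" if v: "v \<in> verts T" for v
  proof (rule ccontr)
    assume none: "\<not> (\<exists>a\<in>A. comparable a v)"
    have "antichain T (insert v A)"
      using anti[unfolded antichain_def] v none comparable_sym
      unfolding antichain_def by blast
    with max have "insert v A = A"
      unfolding maximal_antichain_def by blast
    then have "v \<in> A" by (metis insertI1)
    moreover have "comparable v v" by (simp add: comparable_def)
    ultimately show False using none by blast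
  qed
  with anti show "antichain T A \<and> (\<forall>v\<in>verts T. \<exists>a\<in>A. comparable a v)" by blast
next
  assume "antichain T A \<and> (\<forall>v\<in>verts T. \<exists>a\<in>A. comparable a v)"
  then have anti: "antichain T A" and covers: "\<forall>v\<in>verts T. \<exists>a\<in>A. comparable a v"
    by simp_all
  have "B = A" if B: "antichain T B" "A \<subseteq> B" for B
  proof
    show "B \<subseteq> A"
    proof
      fix b assume "b \<in> B"
      with B(1) have "b \<in> verts T"
        by (auto simp: antichain_def)
      with covers obtain a where "a \<in> A" "comparable a b"
        by blast
      moreover from B(1)[unfolded antichain_def] B(2) \<open>b \<in> B\<close> \<open>a \<in> A\<close>
      have "comparable a b \<Longrightarrow> a = b"
        by blast
      ultimately show "b \<in> A"
        by simp
    qed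
  qed (use B in blast)
  with anti show "maximal_antichain T A"
    unfolding maximal_antichain_def by blast
qed

lemma covers_branchwise:
  assumes "ts \<noteq> []" "A \<subseteq> (\<Union>i<length ts. range (Cons i))"
  shows "(\<forall>v\<in>verts (Node ts). \<exists>a\<in>A. comparable a v) \<longleftrightarrow>
    (\<forall>i<length ts. \<forall>v\<in>verts (ts ! i). \<exists>a\<in>branch_part i A. comparable a v)"
proof
  assume covers: "\<forall>v\<in>verts (Node ts). \<exists>a\<in>A. comparable a v"
  show "\<forall>i<length ts. \<forall>v\<in>verts (ts ! i). \<exists>a\<in>branch_part i A. comparable a v"
  proof (intro allI impI ballI)
    fix i v assume "i < length ts" "v \<in> verts (ts ! i)"
    then have "i # v \<in> verts (Node ts)" by simp
    with covers obtain a where "a \<in> A" "comparable a (i # v)" by blast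
    moreover from \<open>a \<in> A\<close> assms(2) obtain j a' where "a = j # a'" by blast
    ultimately have "a' \<in> branch_part i A" "comparable a' v"
      by (simp_all add: branch_part_def)
    then show "\<exists>a\<in>branch_part i A. comparable a v" by blast
  qed
next
  assume covers: "\<forall>i<length ts. \<forall>v\<in>verts (ts ! i). \<exists>a\<in>branch_part i A. comparable a v"
  show "\<forall>v\<in>verts (Node ts). \<exists>a\<in>A. comparable a v"
  proof
    fix v assume v: "v \<in> verts (Node ts)"
    show "\<exists>a\<in>A. comparable a v"
    proof (cases v)
      case Nil
      have "0 < length ts" "[] \<in> verts (ts ! 0)"
        using assms(1) by simp_all
      with covers obtain a where "a \<in> branch_part 0 A"
        by blast
      then have "0 # a \<in> A"
        by (simp add: branch_part_def)
      with Nil show ?thesis by auto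
    next
      case (Cons i v')
      with v have "i < length ts" "v' \<in> verts (ts ! i)" by simp_all
      with covers obtain a where "a \<in> branch_part i A" "comparable a v'" by blast
      then have "i # a \<in> A" "comparable (i # a) v"
        using Cons by (simp_all add: branch_part_def)
      then show ?thesis by blast
    qed
  qed
qed

lemma maximal_antichain_Node_iff:
  assumes "ts \<noteq> []" "[] \<notin> A"
  shows "maximal_antichain (Node ts) A \<longleftrightarrow> A \<subseteq> (\<Union>i<length ts. range (Cons i))
    \<and> (\<forall>i<length ts. maximal_antichain (ts ! i) (branch_part i A))"
  unfolding maximal_antichain_iff antichain_Node_iff[OF assms(2)]
  by (cases "A \<subseteq> (\<Union>i<length ts. range (Cons i))")
    (simp_all add: covers_branchwise[OF assms(1)] imp_conjR all_conj_distrib)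

lemma maximal_antichain_containing_root_iff: "maximal_antichain T A \<and> [] \<in> A \<longleftrightarrow> A = {[]}"
  using antichain_containing_root_iff[of T A] by (auto simp: maximal_antichain_iff)

lemma maximal_antichain_Node_Nil_iff: "maximal_antichain (Node []) A \<longleftrightarrow> A = {[]}"
proof
  assume max: "maximal_antichain (Node []) A"
  then have "A \<subseteq> {[]}"
    by (simp add: maximal_antichain_def antichain_def verts_Node_Nil)
  moreover from max Nil_in_verts[of "Node []"] obtain a where "a \<in> A"
    unfolding maximal_antichain_iff by blast
  ultimately show "A = {[]}" by auto
next
  assume "A = {[]}"
  then show "maximal_antichain (Node []) A"
    by (simp add: maximal_antichain_iff antichain_def verts_Node_Nil)
qed

lemma P_1_1_eq_card_maximal_antichains: "P T (1::'a::comm_semiring_1) 1 = of_nat (card {A. maximal_antichain T A})"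
proof -
  have "P T (of_nat 1) (of_nat 1) = (of_nat (card {A. maximal_antichain T A}) :: 'a)"
  proof (rule P_of_nat_eq_card[where Q = maximal_antichain])
    show "A \<subseteq> verts T" if "maximal_antichain T A" for T A
      using that by (simp add: maximal_antichain_def antichain_subset_verts)
  qed (simp_all add: maximal_antichain_Node_Nil_iff maximal_antichain_containing_root_iff
    maximal_antichain_Node_iff)
  then show ?thesis by simp
qed

lemma Nil_notin_leaves_Node: "ts \<noteq> [] \<Longrightarrow> [] \<notin> leaves (Node ts)"
  by (auto simp: leaves_Node)

lemma disjoint_leaves_Node_iff:
  assumes "ts \<noteq> []"
  shows "A \<inter> leaves (Node ts) = {} \<longleftrightarrow> (\<forall>i<length ts. branch_part i A \<inter> leaves (ts ! i) = {})"
  unfolding leaves_Node[OF assms] branch_part_def by blast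

lemma P_0_1_eq_card_leafless_maximal_antichains:
  "P T (0::'a::comm_semiring_1) 1 = of_nat (card {A. maximal_antichain T A \<and> A \<inter> leaves T = {}})"
proof -
  have "P T (of_nat 0) (of_nat 1)
      = (of_nat (card {A. maximal_antichain T A \<and> A \<inter> leaves T = {}}) :: 'a)"
  proof (rule P_of_nat_eq_card[where Q = "\<lambda>T A. maximal_antichain T A \<and> A \<inter> leaves T = {}"])
    show "A \<subseteq> verts T" if "maximal_antichain T A \<and> A \<inter> leaves T = {}" for T A
      using that by (simp add: maximal_antichain_def antichain_subset_verts)
    have none: "{A. maximal_antichain (Node []) A \<and> A \<inter> leaves (Node []) = {}} = {}"
      by (simp add: maximal_antichain_Node_Nil_iff leaves_Node_Nil)
    show "card {A. maximal_antichain (Node []) A \<and> A \<inter> leaves (Node []) = {}} = 0"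
      unfolding none by simp
    show "card {A. (maximal_antichain (Node ts) A \<and> A \<inter> leaves (Node ts) = {}) \<and> [] \<in> A}
        = 1 ^ (card (verts (Node ts)) - 1)" if "ts \<noteq> []" for ts
    proof -
      have "{A. (maximal_antichain (Node ts) A \<and> A \<inter> leaves (Node ts) = {}) \<and> [] \<in> A} = {{[]}}"
        using maximal_antichain_containing_root_iff[of "Node ts"] Nil_notin_leaves_Node[OF that]
        by auto
      then show ?thesis by simp
    qed
  qed (simp add: maximal_antichain_Node_iff disjoint_leaves_Node_iff imp_conjR all_conj_distrib conj_ac)
  then show ?thesis by simp
qed

lemma cutset_containing_root_iff: "cutset T C \<and> [] \<in> C \<longleftrightarrow> [] \<in> C \<and> C \<subseteq> verts T"
  by (auto simp: cutset_def intro: bexI[of _ "[]"])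

lemma cutset_Node_Nil_iff: "cutset (Node []) C \<longleftrightarrow> C = {[]}"
  by (auto simp: cutset_def leaves_Node_Nil verts_Node_Nil)

lemma meets_leaves_branchwise:
  assumes "ts \<noteq> []" "C \<subseteq> (\<Union>i<length ts. range (Cons i))"
  shows "(\<forall>l\<in>leaves (Node ts). \<exists>c\<in>C. prefix c l) \<longleftrightarrow>
    (\<forall>i<length ts. \<forall>l\<in>leaves (ts ! i). \<exists>c\<in>branch_part i C. prefix c l)"
proof
  assume meets: "\<forall>l\<in>leaves (Node ts). \<exists>c\<in>C. prefix c l"
  show "\<forall>i<length ts. \<forall>l\<in>leaves (ts ! i). \<exists>c\<in>branch_part i C. prefix c l"
  proof (intro allI impI ballI)
    fix i l assume "i < length ts" "l \<in> leaves (ts ! i)"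
    then have "i # l \<in> leaves (Node ts)"
      using leaves_Node[OF assms(1)] by blast
    with meets obtain c where "c \<in> C" "prefix c (i # l)" by blast
    moreover from \<open>c \<in> C\<close> assms(2) obtain j c' where "c = j # c'" by blast
    ultimately have "c' \<in> branch_part i C" "prefix c' l"
      by (simp_all add: branch_part_def)
    then show "\<exists>c\<in>branch_part i C. prefix c l" by blast
  qed
next
  assume meets: "\<forall>i<length ts. \<forall>l\<in>leaves (ts ! i). \<exists>c\<in>branch_part i C. prefix c l"
  show "\<forall>l\<in>leaves (Node ts). \<exists>c\<in>C. prefix c l"
  proof
    fix l assume "l \<in> leaves (Node ts)"
    then obtain i l' where "i < length ts" "l' \<in> leaves (ts ! i)" "l = i # l'"
      using leaves_Node[OF assms(1)] by blast
    with meets obtain c where "c \<in> branch_part i C" "prefix c l'" by blast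
    with \<open>l = i # l'\<close> have "i # c \<in> C" "prefix (i # c) l"
      by (simp_all add: branch_part_def)
    then show "\<exists>c\<in>C. prefix c l" by blast
  qed
qed

lemma cutset_Node_iff:
  assumes "ts \<noteq> []" "[] \<notin> C"
  shows "cutset (Node ts) C \<longleftrightarrow> C \<subseteq> (\<Union>i<length ts. range (Cons i))
    \<and> (\<forall>i<length ts. cutset (ts ! i) (branch_part i C))"
  unfolding cutset_def subset_verts_Node_iff[OF assms(2)]
  by (cases "C \<subseteq> (\<Union>i<length ts. range (Cons i))")
    (simp_all add: meets_leaves_branchwise[OF assms(1)] imp_conjR all_conj_distrib)

lemma P_1_2_eq_card_cutsets: "P T (1::'a::comm_semiring_1) 2 = of_nat (card {C. cutset T C})"
proof -
  have "P T (of_nat 1) (of_nat 2) = (of_nat (card {C. cutset T C}) :: 'a)"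
  proof (rule P_of_nat_eq_card[where Q = cutset])
    show "C \<subseteq> verts T" if "cutset T C" for T C
      using that by (simp add: cutset_def)
    show "card {C. cutset (Node ts) C \<and> [] \<in> C} = 2 ^ (card (verts (Node ts)) - 1)" for ts
      by (simp add: cutset_containing_root_iff card_subsets_containing)
  qed (simp_all add: cutset_Node_Nil_iff cutset_Node_iff)
  then show ?thesis by simp
qed

theorem proposition2p11:
  fixes T :: rtree
  shows "P T (1::int) 1 = int (card {A. maximal_antichain T A})
    \<and> (\<forall>x :: 'a :: comm_ring_1. P T x 0 = x ^ card (leaves T))
    \<and> P T (0::int) 1 = int (card {A. maximal_antichain T A \<and> A \<inter> leaves T = {}})
    \<and> P T (2::int) 1 = int (card {A. antichain T A})
    \<and> P T (1::int) 2 = int (card {C. cutset T C})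
    \<and> P T (2::int) 2 = 2 ^ card (verts T)"
  by (intro conjI allI P_1_1_eq_card_maximal_antichains P_x_0_eq_power_card_leaves P_0_1_eq_card_leafless_maximal_antichains P_2_1_eq_card_antichains P_1_2_eq_card_cutsets P_2_2_eq_power_card_verts)

end
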